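(* The classes of trajectories $D$ and $D_1$ coincide: every trajectory $\tilde{\mathbf r}_\lambda(t,a_0,\omega_0)$ with $\lambda>0$, $a_0>0$, $\omega_0\ne0$, $0<a_0^3\omega_0^2/(2\lambda)<2$, coincides for all $t\ge0$ with some trajectory $\tilde{\mathbf r}_{\lambda'}(t,1,\omega_0')$ with $\lambda'>0$, $\omega_0'\neq0$, $\omega_0'^2/(2\lambda')<2$ (and trivially $D_1\subset D$).
   Context: Fix $N\ge2$, masses $m_i>0$, $\gamma>0$. Planar configuration space $\mathfrak R=\{\mathbf r=(\mathbf r_1,\dots,\mathbf r_N)\in(\mathbb R^2)^N:\ \mathbf r_i\neq\mathbf r_j \text{ for } i\neq j\}$; $f(\mathbf r)=\sum_{i<j}\frac{\gamma m_im_j}{|\mathbf r_j-\mathbf r_i|}$, $g(\mathbf r)=\sum_i m_i|\mathbf r_i|^2$. Fix $\lambda_*>0$ and a global minimizer $\mathbf r_{\lambda_*}$ of $f+\lambda_*g$ on $\mathfrak R$; for every $\lambda>0$ put $\mathbf r_\lambda=(\lambda_*/\lambda)^{1/3}\mathbf r_{\lambda_*}$ (a global minimizer of $f+\lambda g$). Identify $\mathbb R^2$ with $\mathbb C$ and let $z_{j\lambda}\in\mathbb C$ correspond to $\mathbf r_{j\lambda}$. For $\lambda>0$, $a_0>0$, $\omega_0\ne0$ with $0<a_0^3\omega_0^2/(2\lambda)<2$, set $e=1-a_0^3\omega_0^2/(2\lambda)$ (so $|e|<1$), $p=a_0(1-e)$, $a(\varphi)=p/(1-e\cos\varphi)$,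 and let $\varphi(t)$ be defined by $a_0^2\omega_0\,t=\int_0^{\varphi(t)}\frac{p^2\,d\alpha}{(1-e\cos\alpha)^2}$. The trajectory $\tilde{\mathbf r}_\lambda(t,a_0,\omega_0)$, $t\ge0$, is the one whose $j$-th particle has complex position $Z_j(t)=z_{j\lambda}\,a(\varphi(t))\,e^{i\varphi(t)}$, $j=1,\dots,N$. $D$ is the class of all such trajectories with parameters satisfying $0<a_0^3\omega_0^2/(2\lambda)<2$, and $D_1\subset D$ the subclass with $a_0=1$ (condition $\omega_0^2/(2\lambda)<2$). *)

theory Defs
  imports "HOL-Analysis.Analysis"
begin

text \<open>Planar configurations of N particles, indexed 0..N-1, with R^2 identified with C.\<close>

definition config_space :: "nat \<Rightarrow> (nat \<Rightarrow> complex) set" where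
  "config_space N = {r. \<forall>i<N. \<forall>j<N. i \<noteq> j \<longrightarrow> r i \<noteq> r j}"

definition fpot :: "nat \<Rightarrow> (nat \<Rightarrow> real) \<Rightarrow> real \<Rightarrow> (nat \<Rightarrow> complex) \<Rightarrow> real" where
  "fpot N m \<gamma> r = (\<Sum>(i,j)\<in>{(i,j). i < j \<and> j < N}. \<gamma> * m i * m j / cmod (r j - r i))"

definition gmom :: "nat \<Rightarrow> (nat \<Rightarrow> real) \<Rightarrow> (nat \<Rightarrow> complex) \<Rightarrow> real" where
  "gmom N m r = (\<Sum>i<N. m i * (cmod (r i))^2)"

definition global_min :: "nat \<Rightarrow> (nat \<Rightarrow> real) \<Rightarrow> real \<Rightarrow> real \<Rightarrow> (nat \<Rightarrow> complex) \<Rightarrow> bool" where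
  "global_min N m \<gamma> lam r \<longleftrightarrow> r \<in> config_space N \<and>
     (\<forall>r'\<in>config_space N. fpot N m \<gamma> r + lam * gmom N m r \<le> fpot N m \<gamma> r' + lam * gmom N m r')"

definition ecc :: "real \<Rightarrow> real \<Rightarrow> real \<Rightarrow> real" where
  "ecc lam a0 w0 = 1 - a0^3 * w0^2 / (2 * lam)"

definition prm :: "real \<Rightarrow> real \<Rightarrow> real \<Rightarrow> real" where
  "prm lam a0 w0 = a0 * (1 - ecc lam a0 w0)"

definition rad :: "real \<Rightarrow> real \<Rightarrow> real \<Rightarrow> real \<Rightarrow> real" where
  "rad lam a0 w0 \<phi> = prm lam a0 w0 / (1 - ecc lam a0 w0 * cos \<phi>)"

definition oint :: "(real \<Rightarrow> real) \<Rightarrow> real \<Rightarrow> real" where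
  "oint f x = (if 0 \<le> x then integral {0..x} f else - integral {x..0} f)"

definition Phi :: "real \<Rightarrow> real \<Rightarrow> real \<Rightarrow> real \<Rightarrow> real" where
  "Phi lam a0 w0 x = oint (\<lambda>\<alpha>. (prm lam a0 w0)^2 / (1 - ecc lam a0 w0 * cos \<alpha>)^2) x"

definition angle :: "real \<Rightarrow> real \<Rightarrow> real \<Rightarrow> real \<Rightarrow> real" where
  "angle lam a0 w0 t = (THE \<phi>. a0^2 * w0 * t = Phi lam a0 w0 \<phi>)"

definition zlam :: "real \<Rightarrow> (nat \<Rightarrow> complex) \<Rightarrow> real \<Rightarrow> nat \<Rightarrow> complex" where
  "zlam lamstar rstar lam j = complex_of_real ((lamstar / lam) powr (1/3)) * rstar j"

definition traj :: "real \<Rightarrow> (nat \<Rightarrow> complex) \<Rightarrow> real \<Rightarrow> real \<Rightarrow> real \<Rightarrow> real \<Rightarrow> nat \<Rightarrow> complex" where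
  "traj lamstar rstar lam a0 w0 t j =
     zlam lamstar rstar lam j * complex_of_real (rad lam a0 w0 (angle lam a0 w0 t))
       * exp (\<i> * complex_of_real (angle lam a0 w0 t))"

definition traj_obj :: "nat \<Rightarrow> real \<Rightarrow> (nat \<Rightarrow> complex) \<Rightarrow> real \<Rightarrow> real \<Rightarrow> real \<Rightarrow> real \<Rightarrow> nat \<Rightarrow> complex" where
  "traj_obj N lamstar rstar lam a0 w0 =
     (\<lambda>t j. if 0 \<le> t \<and> j < N then traj lamstar rstar lam a0 w0 t j else 0)"

definition classD :: "nat \<Rightarrow> real \<Rightarrow> (nat \<Rightarrow> complex) \<Rightarrow> (real \<Rightarrow> nat \<Rightarrow> complex) set" where
  "classD N lamstar rstar = {traj_obj N lamstar rstar lam a0 w0 | lam a0 w0.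
      lam > 0 \<and> a0 > 0 \<and> w0 \<noteq> 0 \<and> 0 < a0^3 * w0^2 / (2 * lam) \<and> a0^3 * w0^2 / (2 * lam) < 2}"

definition classD1 :: "nat \<Rightarrow> real \<Rightarrow> (nat \<Rightarrow> complex) \<Rightarrow> (real \<Rightarrow> nat \<Rightarrow> complex) set" where
  "classD1 N lamstar rstar = {traj_obj N lamstar rstar lam 1 w0 | lam w0.
      lam > 0 \<and> w0 \<noteq> 0 \<and> w0^2 / (2 * lam) < 2}"

end

theory Submission
  imports Defs
begin

text \<open>Replacing \<open>(\<lambda>, a\<^sub>0)\<close> by \<open>(\<lambda>/a\<^sub>0\<^sup>3, 1)\<close> keeps the eccentricity \<open>e\<close>, divides
  \<open>p\<close> and hence the radius \<open>a(\<phi>)\<close> by \<open>a\<^sub>0\<close>, and divides the angle integral by \<open>a\<^sub>0\<^sup>2\<close>,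
  which matches the factor \<open>a\<^sub>0\<^sup>2\<close> in \<open>a\<^sub>0\<^sup>2\<omega>\<^sub>0t\<close>; so the angle \<open>\<phi>(t)\<close> is unchanged.
  The lost factor \<open>a\<^sub>0\<close> of the radius is recovered from the configuration, since
  \<open>(\<lambda>\<^sub>*/(\<lambda>/a\<^sub>0\<^sup>3))\<^sup>1\<^sup>/\<^sup>3 = a\<^sub>0 (\<lambda>\<^sub>*/\<lambda>)\<^sup>1\<^sup>/\<^sup>3\<close>.\<close>

lemma oint_divide: "oint (\<lambda>x. f x / c) y = oint f y / c"
  by (simp add: oint_def)

lemma ecc_rescale:
  assumes "a0 > 0"
  shows "ecc (lam / a0^3) 1 w0 = ecc lam a0 w0"
  using assms by (simp add: ecc_def field_simps)

lemma prm_rescale: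
  assumes "a0 > 0"
  shows "prm (lam / a0^3) 1 w0 = prm lam a0 w0 / a0"
  using assms by (simp add: prm_def ecc_rescale)

lemma rad_rescale:
  assumes "a0 > 0"
  shows "rad (lam / a0^3) 1 w0 \<phi> = rad lam a0 w0 \<phi> / a0"
  using assms by (simp add: rad_def prm_rescale ecc_rescale)

lemma Phi_rescale:
  assumes "a0 > 0"
  shows "Phi (lam / a0^3) 1 w0 \<phi> = Phi lam a0 w0 \<phi> / a0^2"
  using assms
  by (simp add: Phi_def prm_rescale ecc_rescale power_divide mult.commute oint_divide [symmetric])

lemma angle_rescale:
  assumes "a0 > 0"
  shows "angle (lam / a0^3) 1 w0 t = angle lam a0 w0 t"
  using assms by (simp add: angle_def Phi_rescale eq_divide_eq ac_simps)

lemma zlam_rescale: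
  assumes "a0 > 0"
  shows "zlam lamstar rstar (lam / a0^3) j = complex_of_real a0 * zlam lamstar rstar lam j"
proof -
  have "(lamstar / (lam / a0^3)) powr (1/3) = ((lamstar / lam) * a0 powr 3) powr (1/3)"
    using assms by (simp add: powr_realpow)
  also have "\<dots> = (lamstar / lam) powr (1/3) * (a0 powr 3) powr (1/3)"
    by (rule powr_mult)
  also have "\<dots> = (lamstar / lam) powr (1/3) * a0"
    using assms by (subst powr_powr) simp
  finally show ?thesis
    unfolding zlam_def by (simp add: mult.assoc)
qed

lemma traj_rescale:
  assumes "a0 > 0"
  shows "traj lamstar rstar (lam / a0^3) 1 w0 t j = traj lamstar rstar lam a0 w0 t j"
  using assms by (simp add: traj_def zlam_rescale rad_rescale angle_rescale)

lemma classD_subset_classD1: "classD N lamstar rstar \<subseteq> classD1 N lamstar rstar"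
proof
  fix T assume "T \<in> classD N lamstar rstar"
  then obtain lam a0 w0 where T: "T = traj_obj N lamstar rstar lam a0 w0"
    and params: "lam > 0" "a0 > 0" "w0 \<noteq> 0" "a0^3 * w0^2 / (2 * lam) < 2"
    unfolding classD_def by blast
  have "T = traj_obj N lamstar rstar (lam / a0^3) 1 w0"
    unfolding T traj_obj_def by (simp only: traj_rescale [OF \<open>a0 > 0\<close>])
  moreover have "lam / a0^3 > 0" and "w0^2 / (2 * (lam / a0^3)) < 2"
    using params by (simp_all add: field_simps)
  ultimately show "T \<in> classD1 N lamstar rstar"
    unfolding classD1_def using params by blast
qed

lemma classD1_subset_classD: "classD1 N lamstar rstar \<subseteq> classD N lamstar rstar"
  unfolding classD_def classD1_def by force

theorem theorem8p1:
  fixes N :: nat and m :: "nat \<Rightarrow> real" and \<gamma> lamstar :: real and rstar :: "nat \<Rightarrow> complex"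
  assumes "N \<ge> 2" and "\<forall>i<N. m i > 0" and "\<gamma> > 0" and "lamstar > 0"
    and "global_min N m \<gamma> lamstar rstar"
  shows "classD N lamstar rstar = classD1 N lamstar rstar"
  using classD_subset_classD1 classD1_subset_classD by (rule subset_antisym)

end
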